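(* Assume $\pi\ge0$ and let $\mathbf r$ be an arbitrary $L\times L$ stochastic matrix. Let $j$ be such that $m_j:=\sum_{i=1}^L\sigma_i r_{ij}>0$. Define $$g_j(d)=\frac{1}{m_j}\sum_{i=1}^L\sigma_i r_{ij}\Big(\sqrt\alpha\,h_{ij}-\pi\alpha\big(d-\sqrt\alpha\,h_{jj}\big)\Big)^+-d,\qquad d\in\mathbb R .$$ Then $g_j$ has a unique zero $\bar d_j^*$. Moreover, almost surely $\bar D_{j,t}\to\bar d_j^*$ as $t\to\infty$. Equivalently, with $N_j(d)=\min\{i:\ h_{ij}>\sqrt\alpha\,\pi(d-\sqrt\alpha h_{jj})\}$ (and sums over an empty index set equal to $0$), $\bar d_j^*$ is the unique solution of $$\bar d_j^*=\frac{\sqrt\alpha\sum_{i=N_j(\bar d_j^* )}^{L}\sigma_i r_{ij}\big(h_{ij}+\pi\alpha h_{jj}\big)}{\sum_{i=1}^L\sigma_i r_{ij}+\pi\alpha\sum_{i=N_j(\bar d_j^* )}^{L}\sigma_i r_{ij}}.$$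
   Context: Supply-chain model. The parameters are a price-sensitivity $\alpha\in(0,1]$, a manufacturer's per-unit production cost $C_m\ge0$, and a supplier's per-unit procurement cost $C_s\ge0$. For $x\in\mathbb R$ write $x^+=\max\{0,x\}$. The market potential takes values $\phi_1<\dots<\phi_L$ with probabilities $\sigma_1,\dots,\sigma_L>0$ summing to $1$, and $\phi_1>\alpha(C_s+C_m)$. Set $$h_{ij}=\frac{2\phi_i-\phi_j-\alpha(C_m+C_s)}{4\sqrt\alpha},\qquad q^*(\phi)=\frac{\phi+\alpha(C_s-C_m)}{2\alpha}.$$ Dynamic system. Let $\mathbf r=(r_{ij})$ be an $L\times L$ stochastic matrix (nonnegative entries, rows summing to $1$); over- and under-reporting are both allowed. The pairs $(\Phi_t,\hat\Phi_t)$, $t=1,2,\dots$, are i.i.d. with $P(\Phi_t=\phi_i,\hat\Phi_t=\phi_j)=\sigma_i r_{ij}$. Here $\Phi_t$ is the true potential in slot $t$ and $\hat\Phi_t$ is the reported one. The noises $\{\mathcal N_t\}$ are i.i.d., bounded, have zero mean, and are independent of $\{(\Phi_t,\hat\Phi_t)\}$. Fix a penalty parameter $\pi$ and, for each $j$, an arbitrary initial value $\bar D_{j,0}\in\mathbb R$. For $t\ge1$, define $\bar D_{j,t}$ as the average of $D_s$ over the slots $s\le t$ with $\hat\Phi_s=\phi_j$, namely $$\bar D_{j,t}=\frac{\sum_{s\le t}D_s\mathbf 1\{\hat\Phi_s=\phi_j\}}{\sum_{s\le t}\mathbf 1\{\hat\Phi_s=\phi_j\}}.$$ If no such slot exists yet,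 set $\bar D_{j,t}=\bar D_{j,0}$. In slot $t$, if $\hat\Phi_t=\phi_j$, the supplier quotes $$Q_t=q^*(\phi_j)+2\pi\big(\bar D_{j,t-1}-\sqrt\alpha\,h_{jj}\big).$$ The manufacturer then sets $$P_t=\frac{\Phi_t+\alpha(Q_t+C_m)}{2\alpha},$$ and the realized demand is $$D_t=(\Phi_t-\alpha P_t)^++\mathcal N_t .$$ *)

theory Defs
  imports "HOL-Probability.Probability"
begin

text \<open>Indices of the market-potential levels are 0-based: 0,...,L-1
  (paper: 1,...,L). Time slots are 0-based: slot t here is slot t+1 of the paper.\<close>

definition hh :: "real \<Rightarrow> real \<Rightarrow> real \<Rightarrow> (nat \<Rightarrow> real) \<Rightarrow> nat \<Rightarrow> nat \<Rightarrow> real" where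
  "hh \<alpha> Cm Cs \<phi> i j = (2 * \<phi> i - \<phi> j - \<alpha> * (Cm + Cs)) / (4 * sqrt \<alpha>)"

definition qstar :: "real \<Rightarrow> real \<Rightarrow> real \<Rightarrow> real \<Rightarrow> real" where
  "qstar \<alpha> Cm Cs x = (x + \<alpha> * (Cs - Cm)) / (2 * \<alpha>)"

definition avg_rep :: "(nat \<Rightarrow> real) \<Rightarrow> (nat \<Rightarrow> nat) \<Rightarrow> real \<Rightarrow> nat \<Rightarrow> nat \<Rightarrow> real" where
  "avg_rep D rep d0 j t =
     (let S = {s. s < t \<and> rep s = j}
      in if card S = 0 then d0 else (\<Sum>s\<in>S. D s) / real (card S))"

definition demand_step ::
  "real \<Rightarrow> real \<Rightarrow> real \<Rightarrow> real \<Rightarrow> (nat \<Rightarrow> real) \<Rightarrow> (nat \<Rightarrow> real)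
   \<Rightarrow> (nat \<Rightarrow> nat) \<Rightarrow> (nat \<Rightarrow> nat) \<Rightarrow> (nat \<Rightarrow> real) \<Rightarrow> real list \<Rightarrow> real" where
  "demand_step \<alpha> Cm Cs \<pi> \<phi> d0 idx rep nz ds =
     (let t = length ds; j = rep t;
          Db = avg_rep (\<lambda>s. ds ! s) rep (d0 j) j t;
          Q = qstar \<alpha> Cm Cs (\<phi> j) + 2 * \<pi> * (Db - sqrt \<alpha> * hh \<alpha> Cm Cs \<phi> j j);
          P = (\<phi> (idx t) + \<alpha> * (Q + Cm)) / (2 * \<alpha>)
      in max 0 (\<phi> (idx t) - \<alpha> * P) + nz t)"

primrec demand_hist ::
  "real \<Rightarrow> real \<Rightarrow> real \<Rightarrow> real \<Rightarrow> (nat \<Rightarrow> real) \<Rightarrow> (nat \<Rightarrow> real)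
   \<Rightarrow> (nat \<Rightarrow> nat) \<Rightarrow> (nat \<Rightarrow> nat) \<Rightarrow> (nat \<Rightarrow> real) \<Rightarrow> nat \<Rightarrow> real list" where
  "demand_hist \<alpha> Cm Cs \<pi> \<phi> d0 idx rep nz 0 = []"
| "demand_hist \<alpha> Cm Cs \<pi> \<phi> d0 idx rep nz (Suc t) =
     (let ds = demand_hist \<alpha> Cm Cs \<pi> \<phi> d0 idx rep nz t
      in ds @ [demand_step \<alpha> Cm Cs \<pi> \<phi> d0 idx rep nz ds])"

definition demand ::
  "real \<Rightarrow> real \<Rightarrow> real \<Rightarrow> real \<Rightarrow> (nat \<Rightarrow> real) \<Rightarrow> (nat \<Rightarrow> real)
   \<Rightarrow> (nat \<Rightarrow> nat) \<Rightarrow> (nat \<Rightarrow> nat) \<Rightarrow> (nat \<Rightarrow> real) \<Rightarrow> nat \<Rightarrow> real" where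
  "demand \<alpha> Cm Cs \<pi> \<phi> d0 idx rep nz t = demand_hist \<alpha> Cm Cs \<pi> \<phi> d0 idx rep nz (Suc t) ! t"

definition Dbar ::
  "real \<Rightarrow> real \<Rightarrow> real \<Rightarrow> real \<Rightarrow> (nat \<Rightarrow> real) \<Rightarrow> (nat \<Rightarrow> real)
   \<Rightarrow> (nat \<Rightarrow> nat) \<Rightarrow> (nat \<Rightarrow> nat) \<Rightarrow> (nat \<Rightarrow> real) \<Rightarrow> nat \<Rightarrow> nat \<Rightarrow> real" where
  "Dbar \<alpha> Cm Cs \<pi> \<phi> d0 idx rep nz j t =
     avg_rep (demand \<alpha> Cm Cs \<pi> \<phi> d0 idx rep nz) rep (d0 j) j t"

definition gfun ::
  "real \<Rightarrow> real \<Rightarrow> real \<Rightarrow> real \<Rightarrow> (nat \<Rightarrow> real) \<Rightarrow> (nat \<Rightarrow> real)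
   \<Rightarrow> (nat \<Rightarrow> nat \<Rightarrow> real) \<Rightarrow> nat \<Rightarrow> nat \<Rightarrow> real \<Rightarrow> real" where
  "gfun \<alpha> Cm Cs \<pi> \<phi> \<sigma> r L j d =
     (1 / (\<Sum>i<L. \<sigma> i * r i j)) *
       (\<Sum>i<L. \<sigma> i * r i j *
          max 0 (sqrt \<alpha> * hh \<alpha> Cm Cs \<phi> i j - \<pi> * \<alpha> * (d - sqrt \<alpha> * hh \<alpha> Cm Cs \<phi> j j)))
     - d"

text \<open>N_j(d): least (0-based) index i with h_ij > sqrt(alpha) pi (d - sqrt(alpha) h_jj);
  L if there is none (so that the sums from N_j(d) are empty).\<close>
definition Nidx ::
  "real \<Rightarrow> real \<Rightarrow> real \<Rightarrow> real \<Rightarrow> (nat \<Rightarrow> real) \<Rightarrow> nat \<Rightarrow> nat \<Rightarrow> real \<Rightarrow> nat" where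
  "Nidx \<alpha> Cm Cs \<pi> \<phi> L j d =
     (if \<exists>i<L. hh \<alpha> Cm Cs \<phi> i j > sqrt \<alpha> * \<pi> * (d - sqrt \<alpha> * hh \<alpha> Cm Cs \<phi> j j)
      then LEAST i. i < L \<and> hh \<alpha> Cm Cs \<phi> i j > sqrt \<alpha> * \<pi> * (d - sqrt \<alpha> * hh \<alpha> Cm Cs \<phi> j j)
      else L)"

definition fixed_point_eq ::
  "real \<Rightarrow> real \<Rightarrow> real \<Rightarrow> real \<Rightarrow> (nat \<Rightarrow> real) \<Rightarrow> (nat \<Rightarrow> real)
   \<Rightarrow> (nat \<Rightarrow> nat \<Rightarrow> real) \<Rightarrow> nat \<Rightarrow> nat \<Rightarrow> real \<Rightarrow> bool" where
  "fixed_point_eq \<alpha> Cm Cs \<pi> \<phi> \<sigma> r L j d =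
     (let N = Nidx \<alpha> Cm Cs \<pi> \<phi> L j d in
      d = sqrt \<alpha> * (\<Sum>i\<in>{N..<L}. \<sigma> i * r i j * (hh \<alpha> Cm Cs \<phi> i j + \<pi> * \<alpha> * hh \<alpha> Cm Cs \<phi> j j))
          / ((\<Sum>i<L. \<sigma> i * r i j) + \<pi> * \<alpha> * (\<Sum>i\<in>{N..<L}. \<sigma> i * r i j)))"

end

theory Submission
  imports Defs "HOL-Library.Discrete_Functions"
begin

(* Write F for mean_dem, so that g_j = F - id. F is a positive combination of the functions
   d \<mapsto> (a_i - \<pi>\<alpha> d)^+, hence nonnegative, nonincreasing and \<pi>\<alpha>-Lipschitz; so F - id is
   strictly decreasing and changes sign on [0, F 0], which gives the unique zero d*, and on the
   levels where the positive part is active F d = d is the closed form with N_j.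
   For the convergence let C_t count the slots reported as j. Then
   C_(t+1) Dbar_(t+1) = C_t Dbar_t + D_t, and in such a slot D_t = F(Dbar_t) + e_t where the
   accumulated errors W_t satisfy W_t / C_t \<rightarrow> 0 almost surely: they consist of averages of
   the noise and of the centred indicators of the true level, weighted by the slowly moving
   dem i (Dbar_t), and a strong law for bounded uncorrelated variables together with Abel
   summation disposes of both. Finally y_t = Dbar_t - d* - W_t / C_t obeys a damped recursion
   in which F pushes towards d*, so C_t (|y_t| - \<epsilon>)^+ eventually decreases while C_t \<rightarrow> \<infinity>. *)

section \<open>Averages of real sequences\<close>

lemma cesaro_tendsto_zero:
  fixes b :: "nat \<Rightarrow> real"
  assumes b: "b \<longlonglongrightarrow> 0"
  shows "(\<lambda>t. (\<Sum>s<t. b s) / real t) \<longlonglongrightarrow> 0"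
proof (rule LIMSEQ_I)
  fix e :: real assume e: "0 < e"
  from LIMSEQ_D[OF b, of "e/2"] e obtain N where N: "\<And>s. s \<ge> N \<Longrightarrow> \<bar>b s\<bar> < e/2" by auto
  define K where "K = (\<Sum>s<N. \<bar>b s\<bar>)"
  obtain M :: nat where M: "M > 2*K/e" using reals_Archimedean2 by blast
  show "\<exists>no. \<forall>n\<ge>no. norm ((\<Sum>s<n. b s) / real n - 0) < e"
  proof (intro exI allI impI)
    fix n assume n: "n \<ge> max (Suc N) M"
    hence nN: "n \<ge> N" and npos: "real n > 0" and nM: "real n \<ge> M" by auto
    have head: "\<bar>\<Sum>s<N. b s\<bar> \<le> K" unfolding K_def by (rule sum_abs)
    have "\<bar>\<Sum>s\<in>{N..<n}. b s\<bar> \<le> (\<Sum>s\<in>{N..<n}. \<bar>b s\<bar>)" by (rule sum_abs)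
    also have "\<dots> \<le> (\<Sum>s\<in>{N..<n}. e/2)" using N by (intro sum_mono) (auto intro: less_imp_le)
    also have "\<dots> \<le> real n * (e/2)" using e by simp
    finally have tail: "\<bar>\<Sum>s\<in>{N..<n}. b s\<bar> \<le> real n * (e/2)" .
    have "(\<Sum>s<n. b s) = (\<Sum>s<N. b s) + (\<Sum>s\<in>{N..<n}. b s)"
      using nN by (metis atLeast0LessThan le0 sum.atLeastLessThan_concat)
    hence "\<bar>\<Sum>s<n. b s\<bar> \<le> K + real n * (e/2)" using head tail by linarith
    also have "K < real n * (e/2)"
    proof -
      have "2*K/e < real n" using M nM by linarith
      thus ?thesis using e by (simp add: field_simps)
    qed
    finally show "norm ((\<Sum>s<n. b s) / real n - 0) < e" using npos by (simp add: field_simps abs_divide)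
  qed
qed

lemma sum_lessThan_by_parts:
  fixes a g :: "nat \<Rightarrow> real"
  shows "(\<Sum>s<t. a s * g s) = (\<Sum>s<t. a s) * g t - (\<Sum>s<t. (\<Sum>r<Suc s. a r) * (g (Suc s) - g s))"
  by (induction t) (simp_all add: algebra_simps)

lemma weighted_averages_tendsto_zero:
  fixes a g :: "nat \<Rightarrow> real"
  assumes averages: "(\<lambda>t. (\<Sum>s<t. a s) / real t) \<longlonglongrightarrow> 0"
    and g_bounded: "\<And>s. \<bar>g s\<bar> \<le> G"
    and g_increments: "eventually (\<lambda>s. real (Suc s) * \<bar>g (Suc s) - g s\<bar> \<le> K) sequentially"
  shows "(\<lambda>t. (\<Sum>s<t. a s * g s) / real t) \<longlonglongrightarrow> 0"
proof -
  have boundary: "(\<lambda>t. (\<Sum>s<t. a s) * g t / real t) \<longlonglongrightarrow> 0"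
  proof (rule tendsto_0_le[OF averages, where K=G])
    show "\<forall>\<^sub>F t in sequentially. norm ((\<Sum>s<t. a s) * g t / real t) \<le> norm ((\<Sum>s<t. a s) / real t) * G"
      using g_bounded
      by (intro always_eventually allI) (simp add: abs_mult divide_right_mono mult_left_mono)
  qed
  have averages_Suc: "(\<lambda>s. (\<Sum>r<Suc s. a r) / real (Suc s)) \<longlonglongrightarrow> 0"
    using LIMSEQ_Suc[OF averages] by simp
  have "(\<lambda>s. (\<Sum>r<Suc s. a r) * (g (Suc s) - g s)) \<longlonglongrightarrow> 0"
  proof (rule tendsto_0_le[OF averages_Suc, where K=K])
    show "\<forall>\<^sub>F s in sequentially. norm ((\<Sum>r<Suc s. a r) * (g (Suc s) - g s))
            \<le> norm ((\<Sum>r<Suc s. a r) / real (Suc s)) * K"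
      using g_increments
    proof eventually_elim
      case (elim s)
      have "norm ((\<Sum>r<Suc s. a r) * (g (Suc s) - g s))
          = \<bar>(\<Sum>r<Suc s. a r) / real (Suc s)\<bar> * (real (Suc s) * \<bar>g (Suc s) - g s\<bar>)"
        by (simp add: abs_mult)
      also have "\<dots> \<le> \<bar>(\<Sum>r<Suc s. a r) / real (Suc s)\<bar> * K"
        using elim by (intro mult_left_mono) auto
      finally show ?case by simp
    qed
  qed
  from tendsto_diff[OF boundary cesaro_tendsto_zero[OF this]]
  show ?thesis by (subst sum_lessThan_by_parts) (simp add: diff_divide_distrib)
qed

lemma abs_average_le_floor_sqrt_average:
  fixes x :: "nat \<Rightarrow> real"
  assumes bounded: "\<And>s. \<bar>x s\<bar> \<le> B" and "n > 0"
  defines "q \<equiv> floor_sqrt n"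
  shows "\<bar>(\<Sum>s<n. x s) / real n\<bar> \<le> \<bar>(\<Sum>s<q\<^sup>2. x s) / real (q\<^sup>2)\<bar> + 2 * B * inverse (real q)"
proof -
  have B: "B \<ge> 0" using bounded[of 0] by linarith
  have q: "q\<^sup>2 \<le> n" "n < (Suc q)\<^sup>2" "q > 0"
    unfolding q_def using \<open>n > 0\<close> Suc_floor_sqrt_power2_gt by auto
  have "n \<le> q\<^sup>2 + 2 * q" using q(2) by (simp add: power2_eq_square)
  then have "real n \<le> real (q\<^sup>2 + 2 * q)" by (simp only: of_nat_le_iff)
  then have gap: "real n - real (q\<^sup>2) \<le> 2 * real q" by simp
  have "(\<Sum>s<n. x s) = (\<Sum>s<q\<^sup>2. x s) + (\<Sum>s\<in>{q\<^sup>2..<n}. x s)"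
    using q(1) by (metis atLeast0LessThan le0 sum.atLeastLessThan_concat)
  moreover have "\<bar>\<Sum>s\<in>{q\<^sup>2..<n}. x s\<bar> \<le> B * (real n - real (q\<^sup>2))"
  proof -
    have "\<bar>\<Sum>s\<in>{q\<^sup>2..<n}. x s\<bar> \<le> (\<Sum>s\<in>{q\<^sup>2..<n}. B)"
      using bounded by (intro order_trans[OF sum_abs] sum_mono)
    also have "\<dots> = B * (real n - real (q\<^sup>2))" using q(1) by (simp add: of_nat_diff)
    finally show ?thesis .
  qed
  ultimately have "\<bar>\<Sum>s<n. x s\<bar> \<le> \<bar>\<Sum>s<q\<^sup>2. x s\<bar> + B * (2 * real q)"
    using abs_triangle_ineq[of "\<Sum>s<q\<^sup>2. x s" "\<Sum>s\<in>{q\<^sup>2..<n}. x s"] mult_left_mono[OF gap B]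
    by linarith
  then have "\<bar>\<Sum>s<n. x s\<bar> / real n \<le> (\<bar>\<Sum>s<q\<^sup>2. x s\<bar> + B * (2 * real q)) / real n"
    by (rule divide_right_mono) simp
  also have "\<dots> = \<bar>\<Sum>s<q\<^sup>2. x s\<bar> / real n + B * (2 * real q) / real n"
    by (rule add_divide_distrib)
  also have "\<dots> \<le> \<bar>\<Sum>s<q\<^sup>2. x s\<bar> / real (q\<^sup>2) + B * (2 * real q) / real (q\<^sup>2)"
    using q B \<open>n > 0\<close> by (intro add_mono divide_left_mono) (auto intro: mult_pos_pos)
  also have "\<dots> = \<bar>\<Sum>s<q\<^sup>2. x s\<bar> / real (q\<^sup>2) + 2 * B * inverse (real q)"
    using q(3) by (simp add: power2_eq_square field_simps)
  finally show ?thesis by (simp add: abs_divide)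
qed

lemma averages_tendsto_zero_of_squares:
  fixes x :: "nat \<Rightarrow> real"
  assumes bounded: "\<And>s. \<bar>x s\<bar> \<le> B"
    and squares: "(\<lambda>k. (\<Sum>s<k\<^sup>2. x s) / real (k\<^sup>2)) \<longlonglongrightarrow> 0"
  shows "(\<lambda>n. (\<Sum>s<n. x s) / real n) \<longlonglongrightarrow> 0"
proof (rule Lim_null_comparison)
  have q_at_top: "filterlim floor_sqrt at_top sequentially"
    unfolding filterlim_at_top eventually_sequentially
    by (meson le_floor_sqrtI le_trans power2_nat_le_imp_le)
  have "(\<lambda>n. \<bar>(\<Sum>s<(floor_sqrt n)\<^sup>2. x s) / real ((floor_sqrt n)\<^sup>2)\<bar>
      + 2 * B * inverse (real (floor_sqrt n))) \<longlonglongrightarrow> 0 + 2 * B * 0"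
    by (intro tendsto_add tendsto_mult tendsto_const tendsto_rabs_zero
        filterlim_compose[OF squares q_at_top] tendsto_inverse_0_at_top filterlim_compose[OF filterlim_real_sequentially q_at_top])
  then show "(\<lambda>n. \<bar>(\<Sum>s<(floor_sqrt n)\<^sup>2. x s) / real ((floor_sqrt n)\<^sup>2)\<bar>
      + 2 * B * inverse (real (floor_sqrt n))) \<longlonglongrightarrow> 0"
    by simp
  show "eventually (\<lambda>n. norm ((\<Sum>s<n. x s) / real n)
      \<le> \<bar>(\<Sum>s<(floor_sqrt n)\<^sup>2. x s) / real ((floor_sqrt n)\<^sup>2)\<bar> + 2 * B * inverse (real (floor_sqrt n))) sequentially"
    using eventually_gt_at_top[of 0]
    by eventually_elim (unfold real_norm_def, rule abs_average_le_floor_sqrt_average[OF bounded])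
qed

section \<open>A deterministic stochastic-approximation lemma\<close>

lemma damped_step_excess_le:
  fixes m c e y y' x r \<delta> :: real
  assumes m_ge: "m \<ge> c" "m \<ge> 1" and c: "c \<ge> 0"
    and x: "x = y + r" and r: "\<bar>r\<bar> \<le> e"
    and \<delta>_opposes: "\<delta> * x \<le> 0" and \<delta>_bounded: "\<bar>\<delta>\<bar> \<le> c * \<bar>x\<bar>"
    and step: "(m + 1) * y' = m * y + \<delta>"
  shows "(m + 1) * max 0 (\<bar>y'\<bar> - e) \<le> m * max 0 (\<bar>y\<bar> - e)"
proof -
  obtain \<beta> where \<beta>: "0 \<le> \<beta>" "\<beta> \<le> c" and \<delta>: "\<delta> = - \<beta> * x"
  proof (cases "x = 0")
    case True
    show ?thesis using True \<delta>_bounded c by (intro that[of 0]) auto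
  next
    case False
    show ?thesis
    proof (rule that[of "- \<delta> / x"])
      have "- \<delta> / x = - (\<delta> * x) / (x * x)" using False by simp
      also have "\<dots> \<ge> 0"
      proof (rule divide_nonneg_pos)
        show "0 < x * x" using False not_real_square_gt_zero[of x] by blast
      qed (use \<delta>_opposes in simp)
      finally show "0 \<le> - \<delta> / x" .
      have "- \<delta> / x \<le> \<bar>- \<delta> / x\<bar>" by (rule abs_ge_self)
      also have "\<dots> = \<bar>\<delta>\<bar> / \<bar>x\<bar>" by (simp add: abs_divide)
      also have "\<dots> \<le> c" using \<delta>_bounded False by (simp add: divide_le_eq mult.commute)
      finally show "- \<delta> / x \<le> c" .
    qed (use False in simp)
  qed
  define P where "P = max 0 (\<bar>y\<bar> - e)"
  have P: "P \<ge> 0" "\<bar>y\<bar> \<le> P + e" unfolding P_def by auto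
  have "\<bar>(m + 1) * y'\<bar> = \<bar>(m - \<beta>) * y - \<beta> * r\<bar>" using step \<delta> x by (simp add: algebra_simps)
  also have "\<dots> \<le> \<bar>(m - \<beta>) * y\<bar> + \<bar>\<beta> * r\<bar>" by (rule abs_triangle_ineq4)
  also have "\<dots> = (m - \<beta>) * \<bar>y\<bar> + \<beta> * \<bar>r\<bar>" using \<beta> m_ge by (simp add: abs_mult)
  also have "\<dots> \<le> (m - \<beta>) * (P + e) + \<beta> * e"
    using \<beta> m_ge P r by (intro add_mono mult_left_mono) auto
  also have "\<dots> \<le> m * P + m * e" using \<beta> P by (simp add: algebra_simps mult_right_mono)
  finally have "\<bar>(m + 1) * y'\<bar> \<le> m * P + m * e" .
  have "(m + 1) * max 0 (\<bar>y'\<bar> - e) = max 0 ((m + 1) * \<bar>y'\<bar> - (m + 1) * e)"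
    using m_ge by (simp add: max_mult_distrib_left algebra_simps)
  also have "(m + 1) * \<bar>y'\<bar> = \<bar>(m + 1) * y'\<bar>" using m_ge by (simp add: abs_mult)
  also have "max 0 (\<bar>(m + 1) * y'\<bar> - (m + 1) * e) \<le> m * P"
    using \<open>\<bar>(m + 1) * y'\<bar> \<le> m * P + m * e\<close> P m_ge r by (auto simp: algebra_simps)
  finally show ?thesis unfolding P_def .
qed

lemma running_average_excess_step:
  fixes C A A' W W' Y :: real and F :: "real \<Rightarrow> real"
  assumes C: "C \<ge> c" "C \<ge> 1" and W: "\<bar>W / C\<bar> \<le> e"
    and A_step: "(C + 1) * A' = C * A + Y"
    and W_step: "W' = W + (Y - F A)"
    and F_antimono: "\<And>x y. x \<le> y \<Longrightarrow> F y \<le> F x"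
    and F_lipschitz: "\<And>x y. \<bar>F x - F y\<bar> \<le> c * \<bar>x - y\<bar>"
    and c: "c \<ge> 0"
    and fixpoint: "F a = a"
  shows "(C + 1) * max 0 (\<bar>A' - a - W' / (C + 1)\<bar> - e) \<le> C * max 0 (\<bar>A - a - W / C\<bar> - e)"
proof -
  have "(C + 1) * (A' - a - W' / (C + 1)) = (C + 1) * A' - (C + 1) * a - W'"
    using C by (simp add: field_simps)
  also have "\<dots> = C * A + Y - (C + 1) * a - (W + (Y - F A))" by (simp only: A_step W_step)
  also have "\<dots> = C * (A - a - W / C) + (F A - F a)"
    using C fixpoint by (simp add: field_simps)
  finally have step: "(C + 1) * (A' - a - W' / (C + 1)) = C * (A - a - W / C) + (F A - F a)" .
  have "(F A - F a) * (A - a) \<le> 0"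
    using F_antimono[of A a] F_antimono[of a A]
    by (cases "A \<le> a") (auto intro: mult_nonneg_nonpos mult_nonpos_nonneg)
  from damped_step_excess_le[OF C c _ W this F_lipschitz step] show ?thesis by simp
qed

lemma running_average_tendsto_fixpoint:
  fixes J :: "nat \<Rightarrow> bool" and C A W Y :: "nat \<Rightarrow> real" and F :: "real \<Rightarrow> real"
  assumes C_step: "\<And>t. C (Suc t) = C t + (if J t then 1 else 0)"
    and A_step: "\<And>t. J t \<Longrightarrow> C (Suc t) * A (Suc t) = C t * A t + Y t"
    and A_const: "\<And>t. \<not> J t \<Longrightarrow> A (Suc t) = A t"
    and W_step: "\<And>t. W (Suc t) = W t + (if J t then Y t - F (A t) else 0)"
    and C_at_top: "filterlim C at_top sequentially"
    and W_small: "(\<lambda>t. W t / C t) \<longlonglongrightarrow> 0"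
    and F_antimono: "\<And>x y. x \<le> y \<Longrightarrow> F y \<le> F x"
    and F_lipschitz: "\<And>x y. \<bar>F x - F y\<bar> \<le> c * \<bar>x - y\<bar>"
    and c: "c \<ge> 0"
    and fixpoint: "F a = a"
  shows "A \<longlonglongrightarrow> a"
proof (rule LIMSEQ_I)
  fix \<epsilon> :: real assume "\<epsilon> > 0"
  define e where "e = \<epsilon> / 4"
  have e: "e > 0" using \<open>\<epsilon> > 0\<close> unfolding e_def by simp
  have C_large: "\<And>Z. eventually (\<lambda>t. Z \<le> C t) sequentially" using C_at_top filterlim_at_top by blast
  have "eventually (\<lambda>t. \<bar>W t / C t\<bar> \<le> e) sequentially"
    using LIMSEQ_D[OF W_small e] by (auto simp: eventually_sequentially intro: less_imp_le)
  from eventually_conj[OF C_large[of "max c 1"] this]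
  obtain T where T: "\<And>t. t \<ge> T \<Longrightarrow> C t \<ge> max c 1 \<and> \<bar>W t / C t\<bar> \<le> e"
    by (auto simp: eventually_sequentially)
  \<comment> \<open>Once the error term W/C is below e, the excess over e of the distance of A - W/C from the
      fixpoint, weighted by C, can only decrease.\<close>
  define y where "y t = A t - a - W t / C t" for t
  define Q where "Q t = C t * max 0 (\<bar>y t\<bar> - e)" for t
  have Q_step: "Q (Suc t) \<le> Q t" if "t \<ge> T" for t
  proof (cases "J t")
    case True
    then have C_Suc: "C (Suc t) = C t + 1" using C_step by simp
    then have "(C t + 1) * A (Suc t) = C t * A t + Y t" using A_step[OF True] by simp
    moreover have "W (Suc t) = W t + (Y t - F (A t))" using W_step[of t] True by simp
    moreover have "C t \<ge> c" "C t \<ge> 1" "\<bar>W t / C t\<bar> \<le> e" using T[OF that] by auto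
    ultimately show ?thesis
      using running_average_excess_step[OF _ _ _ _ _ F_antimono F_lipschitz c fixpoint]
      unfolding Q_def y_def C_Suc by blast
  qed (simp add: Q_def y_def C_step A_const W_step)
  have Q_le: "Q t \<le> Q T" if "t \<ge> T" for t
    using that by (induction t rule: dec_induct) (auto intro: order_trans[OF Q_step])
  obtain T' where T': "\<And>t. t \<ge> T' \<Longrightarrow> C t \<ge> max 1 (Q T / e)"
    using C_large[of "max 1 (Q T / e)"] by (auto simp: eventually_sequentially)
  show "\<exists>T. \<forall>t\<ge>T. norm (A t - a) < \<epsilon>"
  proof (intro exI allI impI)
    fix t assume t: "t \<ge> max T T'"
    have C_t: "C t \<ge> 1" "Q T \<le> C t * e" using T'[of t] t e by (auto simp: divide_le_eq mult.commute)
    have "C t * max 0 (\<bar>y t\<bar> - e) \<le> Q T" using Q_le[of t] t unfolding Q_def by simp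
    also have "\<dots> \<le> C t * e" by (rule C_t(2))
    finally have "max 0 (\<bar>y t\<bar> - e) \<le> e" by (rule mult_left_le_imp_le) (use C_t in simp)
    hence "\<bar>y t\<bar> \<le> 2 * e" by simp
    moreover have "\<bar>W t / C t\<bar> \<le> e" using T t by (meson max.boundedE)
    ultimately have "\<bar>A t - a\<bar> \<le> 3 * e" unfolding y_def by linarith
    then show "norm (A t - a) < \<epsilon>" unfolding e_def using \<open>\<epsilon> > 0\<close> by simp
  qed
qed

section \<open>A strong law for bounded uncorrelated variables\<close>

context prob_space
begin

lemma AE_tendsto_zero_of_summable_expectation:
  fixes Z :: "nat \<Rightarrow> 'a \<Rightarrow> real"
  assumes [measurable]: "\<And>k. Z k \<in> borel_measurable M"
    and nonneg: "\<And>k \<omega>. Z k \<omega> \<ge> 0"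
    and integrable: "\<And>k. integrable M (Z k)"
    and summable: "summable (\<lambda>k. expectation (Z k))"
  shows "AE \<omega> in M. (\<lambda>k. Z k \<omega>) \<longlonglongrightarrow> 0"
proof -
  have "(\<integral>\<^sup>+\<omega>. (\<Sum>k. ennreal (Z k \<omega>)) \<partial>M) = (\<Sum>k. \<integral>\<^sup>+\<omega>. ennreal (Z k \<omega>) \<partial>M)"
    by (rule nn_integral_suminf) measurable
  also have "\<dots> = (\<Sum>k. ennreal (expectation (Z k)))"
    by (intro suminf_cong nn_integral_eq_integral integrable) (simp add: nonneg)
  also have "\<dots> = ennreal (\<Sum>k. expectation (Z k))"
    using nonneg summable by (intro suminf_ennreal2 integral_nonneg_AE) simp_all
  finally have "(\<integral>\<^sup>+\<omega>. (\<Sum>k. ennreal (Z k \<omega>)) \<partial>M) \<noteq> \<infinity>" by simp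
  then have "AE \<omega> in M. (\<Sum>k. ennreal (Z k \<omega>)) \<noteq> \<infinity>"
    by (intro nn_integral_PInf_AE) measurable
  then show ?thesis
  proof eventually_elim
    case (elim \<omega>)
    then have "summable (\<lambda>k. Z k \<omega>)" using nonneg by (intro summable_suminf_not_top) auto
    then show ?case by (rule summable_LIMSEQ_zero)
  qed
qed

lemma expectation_square_sum_le:
  fixes X :: "nat \<Rightarrow> 'a \<Rightarrow> real"
  assumes [measurable]: "\<And>s. X s \<in> borel_measurable M"
    and bounded: "\<And>s. AE \<omega> in M. \<bar>X s \<omega>\<bar> \<le> B"
    and uncorrelated: "\<And>a b. a \<noteq> b \<Longrightarrow> expectation (\<lambda>\<omega>. X a \<omega> * X b \<omega>) = 0"
  shows "integrable M (\<lambda>\<omega>. (\<Sum>s<n. X s \<omega>)\<^sup>2)"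
    and "expectation (\<lambda>\<omega>. (\<Sum>s<n. X s \<omega>)\<^sup>2) \<le> real n * B\<^sup>2"
proof -
  have product_bounded: "AE \<omega> in M. \<bar>X a \<omega> * X b \<omega>\<bar> \<le> B\<^sup>2" for a b
    using bounded[of a] bounded[of b]
    by eventually_elim (simp add: abs_mult power2_eq_square mult_mono')
  have integrable_product: "integrable M (\<lambda>\<omega>. X a \<omega> * X b \<omega>)" for a b
    using product_bounded[of a b] by (intro integrable_const_bound[where B="B\<^sup>2"]) simp_all
  have square: "(\<Sum>s<n. X s \<omega>)\<^sup>2 = (\<Sum>a<n. \<Sum>b<n. X a \<omega> * X b \<omega>)" for \<omega>
    unfolding power2_eq_square sum_product ..
  show "integrable M (\<lambda>\<omega>. (\<Sum>s<n. X s \<omega>)\<^sup>2)"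
    unfolding square by (simp add: integrable_product)
  have "expectation (\<lambda>\<omega>. (\<Sum>s<n. X s \<omega>)\<^sup>2) = (\<Sum>a<n. \<Sum>b<n. expectation (\<lambda>\<omega>. X a \<omega> * X b \<omega>))"
    unfolding square by (simp add: integrable_product)
  also have "\<dots> = (\<Sum>a<n. expectation (\<lambda>\<omega>. X a \<omega> * X a \<omega>))"
  proof (intro sum.cong refl)
    fix a assume "a \<in> {..<n}"
    moreover have "(\<Sum>b<n. expectation (\<lambda>\<omega>. X a \<omega> * X b \<omega>))
        = (\<Sum>b<n. if b = a then expectation (\<lambda>\<omega>. X a \<omega> * X a \<omega>) else 0)"
      using uncorrelated by (intro sum.cong) auto
    ultimately show "(\<Sum>b<n. expectation (\<lambda>\<omega>. X a \<omega> * X b \<omega>)) = expectation (\<lambda>\<omega>. X a \<omega> * X a \<omega>)"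
      by simp
  qed
  also have "\<dots> \<le> (\<Sum>a<n. B\<^sup>2)"
  proof (intro sum_mono)
    fix a
    have "expectation (\<lambda>\<omega>. X a \<omega> * X a \<omega>) \<le> expectation (\<lambda>\<omega>. B\<^sup>2)"
      using product_bounded[of a a] by (intro integral_mono_AE integrable_product) auto
    then show "expectation (\<lambda>\<omega>. X a \<omega> * X a \<omega>) \<le> B\<^sup>2" by (simp add: prob_space)
  qed
  finally show "expectation (\<lambda>\<omega>. (\<Sum>s<n. X s \<omega>)\<^sup>2) \<le> real n * B\<^sup>2" by simp
qed

text \<open>The averages along the squares converge by a Borel--Cantelli argument on second moments;
  boundedness bridges the gaps between consecutive squares.\<close>

lemma slln_bounded_uncorrelated:
  fixes X :: "nat \<Rightarrow> 'a \<Rightarrow> real"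
  assumes [measurable]: "\<And>s. X s \<in> borel_measurable M"
    and bounded: "\<And>s. AE \<omega> in M. \<bar>X s \<omega>\<bar> \<le> B"
    and uncorrelated: "\<And>a b. a \<noteq> b \<Longrightarrow> expectation (\<lambda>\<omega>. X a \<omega> * X b \<omega>) = 0"
  shows "AE \<omega> in M. (\<lambda>t. (\<Sum>s<t. X s \<omega>) / real t) \<longlonglongrightarrow> 0"
proof -
  define Z where "Z k \<omega> = ((\<Sum>s<k\<^sup>2. X s \<omega>) / real (k\<^sup>2))\<^sup>2" for k \<omega>
  note square_sum = expectation_square_sum_le[OF _ bounded uncorrelated]
  have "expectation (Z k) \<le> B\<^sup>2 * inverse (real k ^ 2)" for k
  proof (cases "k = 0")
    case False
    have "expectation (Z k) = expectation (\<lambda>\<omega>. (\<Sum>s<k\<^sup>2. X s \<omega>)\<^sup>2) / (real (k\<^sup>2))\<^sup>2"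
      unfolding Z_def power_divide by simp
    also have "\<dots> \<le> (real (k\<^sup>2) * B\<^sup>2) / (real (k\<^sup>2))\<^sup>2"
      by (intro divide_right_mono square_sum) simp_all
    also have "\<dots> = B\<^sup>2 * inverse (real k ^ 2)" using False by (simp add: field_simps power2_eq_square)
    finally show ?thesis .
  qed (simp add: Z_def[abs_def])
  moreover have "expectation (Z k) \<ge> 0" for k by (simp add: Z_def)
  ultimately have "summable (\<lambda>k. expectation (Z k))"
    by (intro summable_comparison_test'[OF summable_mult[OF inverse_power_summable]]) auto
  then have "AE \<omega> in M. (\<lambda>k. Z k \<omega>) \<longlonglongrightarrow> 0"
    unfolding Z_def power_divide
    by (intro AE_tendsto_zero_of_summable_expectation integrable_divide square_sum) auto
  moreover have "AE \<omega> in M. \<forall>s. \<bar>X s \<omega>\<bar> \<le> B" using bounded by (simp add: AE_all_countable)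
  ultimately show ?thesis
  proof eventually_elim
    case (elim \<omega>)
    then have "(\<lambda>k. sqrt (Z k \<omega>)) \<longlonglongrightarrow> 0" using tendsto_real_sqrt by fastforce
    then have "(\<lambda>k. (\<Sum>s<k\<^sup>2. X s \<omega>) / real (k\<^sup>2)) \<longlonglongrightarrow> 0"
      unfolding Z_def real_sqrt_abs by (rule tendsto_rabs_zero_cancel)
    with elim show ?case by (intro averages_tendsto_zero_of_squares[where B=B]) auto
  qed
qed

end

section \<open>The limit equation\<close>

lemma length_demand_hist: "length (demand_hist \<alpha> Cm Cs \<pi> \<phi> d0 idx rep nz t) = t"
  by (induction t) (simp_all add: Let_def)

lemma demand_hist_nth:
  assumes "s < t"
  shows "demand_hist \<alpha> Cm Cs \<pi> \<phi> d0 idx rep nz t ! s = demand \<alpha> Cm Cs \<pi> \<phi> d0 idx rep nz s"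
  using assms
proof (induction t)
  case (Suc t)
  then show ?case
    by (auto simp: less_Suc_eq Let_def nth_append length_demand_hist demand_def)
qed simp

lemma demand_eq_demand_step:
  "demand \<alpha> Cm Cs \<pi> \<phi> d0 idx rep nz t
    = demand_step \<alpha> Cm Cs \<pi> \<phi> d0 idx rep nz (demand_hist \<alpha> Cm Cs \<pi> \<phi> d0 idx rep nz t)"
  unfolding demand_def by (simp add: Let_def nth_append length_demand_hist)

lemma avg_rep_cong: "(\<And>s. s < t \<Longrightarrow> D s = D' s) \<Longrightarrow> avg_rep D rep d0 j t = avg_rep D' rep d0 j t"
  unfolding avg_rep_def Let_def by (auto intro!: sum.cong)

lemma demand_eq:
  assumes "\<alpha> > 0" and "rep t = j" and "idx t = i"
  shows "demand \<alpha> Cm Cs \<pi> \<phi> d0 idx rep nz t =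
    max 0 (sqrt \<alpha> * hh \<alpha> Cm Cs \<phi> i j
           - \<pi> * \<alpha> * (Dbar \<alpha> Cm Cs \<pi> \<phi> d0 idx rep nz j t - sqrt \<alpha> * hh \<alpha> Cm Cs \<phi> j j))
    + nz t"
proof -
  define Db where "Db = Dbar \<alpha> Cm Cs \<pi> \<phi> d0 idx rep nz j t"
  have "avg_rep (\<lambda>s. demand_hist \<alpha> Cm Cs \<pi> \<phi> d0 idx rep nz t ! s) rep (d0 j) j t = Db"
    unfolding Db_def Dbar_def by (rule avg_rep_cong) (simp add: demand_hist_nth)
  then have "demand \<alpha> Cm Cs \<pi> \<phi> d0 idx rep nz t =
     max 0 (\<phi> i - \<alpha> * ((\<phi> i + \<alpha> * (qstar \<alpha> Cm Cs (\<phi> j)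
       + 2 * \<pi> * (Db - sqrt \<alpha> * hh \<alpha> Cm Cs \<phi> j j) + Cm)) / (2 * \<alpha>))) + nz t"
    unfolding demand_eq_demand_step demand_step_def Let_def length_demand_hist assms(2,3) by simp
  also have "\<phi> i - \<alpha> * ((\<phi> i + \<alpha> * (qstar \<alpha> Cm Cs (\<phi> j)
       + 2 * \<pi> * (Db - sqrt \<alpha> * hh \<alpha> Cm Cs \<phi> j j) + Cm)) / (2 * \<alpha>))
     = sqrt \<alpha> * hh \<alpha> Cm Cs \<phi> i j - \<pi> * \<alpha> * (Db - sqrt \<alpha> * hh \<alpha> Cm Cs \<phi> j j)"
  proof -
    have h_i: "sqrt \<alpha> * hh \<alpha> Cm Cs \<phi> i j = (2 * \<phi> i - \<phi> j - \<alpha> * (Cm + Cs)) / 4"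
      unfolding hh_def using \<open>\<alpha> > 0\<close> by (simp add: field_simps)
    show ?thesis unfolding h_i qstar_def using \<open>\<alpha> > 0\<close> by (simp add: field_simps)
  qed
  finally show ?thesis unfolding Db_def .
qed

lemma abs_max_0_diff_le: "\<bar>max 0 (a::real) - max 0 b\<bar> \<le> \<bar>a - b\<bar>"
  by (simp add: max_def)

locale limit_equation =
  fixes \<alpha> Cm Cs \<pi> :: real and \<phi> \<sigma> :: "nat \<Rightarrow> real" and r :: "nat \<Rightarrow> nat \<Rightarrow> real" and L j :: nat
  assumes alpha_pos: "\<alpha> > 0" and pi_nonneg: "\<pi> \<ge> 0" and phi_mono: "strict_mono_on {..<L} \<phi>"
    and weight_nonneg: "\<And>i. i < L \<Longrightarrow> \<sigma> i * r i j \<ge> 0"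
    and mass_pos: "(\<Sum>i<L. \<sigma> i * r i j) > 0"
begin

definition "m = (\<Sum>i<L. \<sigma> i * r i j)"
definition "w i = \<sigma> i * r i j" for i
definition "c = \<pi> * \<alpha>"
definition "hj i = hh \<alpha> Cm Cs \<phi> i j" for i

text \<open>dem i d is the expected demand in a slot with true level i and report j when the current
  estimate is d; mean_dem averages it over the true level given the report j.\<close>
definition "dem i d = max 0 (sqrt \<alpha> * hj i - \<pi> * \<alpha> * (d - sqrt \<alpha> * hj j))" for i d
definition "mean_dem d = (1 / m) * (\<Sum>i<L. w i * dem i d)" for d

lemma m_pos: "m > 0" using mass_pos unfolding m_def .
lemma c_nonneg: "c \<ge> 0" unfolding c_def using pi_nonneg alpha_pos by simp
lemma w_nonneg: "i < L \<Longrightarrow> w i \<ge> 0" unfolding w_def using weight_nonneg .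
lemma sum_w: "(\<Sum>i<L. w i) = m" unfolding w_def m_def ..

lemma gfun_eq: "gfun \<alpha> Cm Cs \<pi> \<phi> \<sigma> r L j d = mean_dem d - d"
  unfolding gfun_def mean_dem_def dem_def w_def hj_def m_def ..

lemma dem_nonneg: "dem i d \<ge> 0" unfolding dem_def by simp

lemma dem_antimono:
  assumes "x \<le> y"
  shows "dem i y \<le> dem i x"
proof -
  have "\<pi> * \<alpha> * (x - sqrt \<alpha> * hj j) \<le> \<pi> * \<alpha> * (y - sqrt \<alpha> * hj j)"
    using pi_nonneg alpha_pos assms by (intro mult_left_mono) auto
  then show ?thesis unfolding dem_def by (simp add: max_def)
qed

lemma dem_lipschitz: "\<bar>dem i x - dem i y\<bar> \<le> c * \<bar>x - y\<bar>"
proof -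
  have "\<bar>dem i x - dem i y\<bar> \<le> \<bar>c * (y - x)\<bar>"
    unfolding dem_def c_def using abs_max_0_diff_le by (simp add: algebra_simps)
  also have "\<dots> = c * \<bar>x - y\<bar>" using c_nonneg by (simp add: abs_mult abs_minus_commute)
  finally show ?thesis .
qed

lemma mean_dem_nonneg: "mean_dem d \<ge> 0"
  unfolding mean_dem_def using m_pos
  by (intro mult_nonneg_nonneg sum_nonneg) (auto intro: w_nonneg dem_nonneg)

lemma mean_dem_antimono: "x \<le> y \<Longrightarrow> mean_dem y \<le> mean_dem x"
  unfolding mean_dem_def using m_pos w_nonneg dem_antimono
  by (intro mult_left_mono sum_mono) (auto intro: mult_left_mono)

lemma mean_dem_lipschitz: "\<bar>mean_dem x - mean_dem y\<bar> \<le> c * \<bar>x - y\<bar>"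
proof -
  have "mean_dem x - mean_dem y = (1/m) * (\<Sum>i<L. w i * (dem i x - dem i y))"
    unfolding mean_dem_def by (simp add: sum_subtractf right_diff_distrib)
  then have "\<bar>mean_dem x - mean_dem y\<bar> = (1/m) * \<bar>\<Sum>i<L. w i * (dem i x - dem i y)\<bar>"
    using m_pos by (simp add: abs_mult)
  also have "\<dots> \<le> (1/m) * (\<Sum>i<L. w i * (c * \<bar>x - y\<bar>))"
    using m_pos w_nonneg dem_lipschitz
    by (intro mult_left_mono order_trans[OF sum_abs] sum_mono)
      (auto simp: abs_mult intro: mult_left_mono)
  also have "\<dots> = c * \<bar>x - y\<bar>" using m_pos by (simp add: sum_distrib_right[symmetric] sum_w)
  finally show ?thesis .
qed

lemma mean_dem_fixpoint_exists: "\<exists>d. mean_dem d = d"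
proof -
  have "continuous_on {0 .. mean_dem 0} (\<lambda>d. mean_dem d - d)"
    unfolding mean_dem_def dem_def by (intro continuous_intros)
  moreover have "mean_dem (mean_dem 0) - mean_dem 0 \<le> 0"
    using mean_dem_antimono[OF mean_dem_nonneg[of 0]] by simp
  ultimately obtain d where "mean_dem d - d = 0"
    using IVT2'[of "\<lambda>d. mean_dem d - d" "mean_dem 0" 0 0] mean_dem_nonneg by auto
  then show ?thesis by auto
qed

lemma mean_dem_fixpoint_unique: "mean_dem x = x \<Longrightarrow> mean_dem y = y \<Longrightarrow> x = y"
  using mean_dem_antimono[of x y] mean_dem_antimono[of y x] by (cases "x \<le> y") auto

lemma hj_mono: "i \<le> i' \<Longrightarrow> i' < L \<Longrightarrow> hj i \<le> hj i'"
  using strict_mono_on_leD[OF phi_mono, of i i'] alpha_pos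
  unfolding hj_def hh_def by (intro divide_right_mono) auto

lemma Nidx_le_iff:
  assumes "i < L"
  shows "Nidx \<alpha> Cm Cs \<pi> \<phi> L j d \<le> i \<longleftrightarrow> hj i > sqrt \<alpha> * \<pi> * (d - sqrt \<alpha> * hj j)"
proof -
  define P where "P i \<longleftrightarrow> i < L \<and> hj i > sqrt \<alpha> * \<pi> * (d - sqrt \<alpha> * hj j)" for i
  have Nidx: "Nidx \<alpha> Cm Cs \<pi> \<phi> L j d = (if \<exists>i. P i then (LEAST i. P i) else L)"
    unfolding Nidx_def P_def hj_def by auto
  show ?thesis
  proof (cases "\<exists>i. P i")
    case True
    then have "P (LEAST i. P i)" by (rule LeastI_ex)
    moreover have "hj (LEAST i. P i) \<le> hj i" if "(LEAST i. P i) \<le> i"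
      using that assms by (rule hj_mono)
    moreover have "(LEAST i. P i) \<le> i" if "P i" using that by (rule Least_le)
    ultimately show ?thesis using Nidx True assms unfolding P_def by force
  next
    case False
    then show ?thesis using Nidx assms unfolding P_def by auto
  qed
qed

lemma dem_pos_iff: "dem i d > 0 \<longleftrightarrow> hj i > sqrt \<alpha> * \<pi> * (d - sqrt \<alpha> * hj j)"
proof -
  have "sqrt \<alpha> * hj i - \<pi> * \<alpha> * (d - sqrt \<alpha> * hj j) = sqrt \<alpha> * (hj i - sqrt \<alpha> * \<pi> * (d - sqrt \<alpha> * hj j))"
    using alpha_pos by (simp add: algebra_simps)
  then show ?thesis unfolding dem_def using alpha_pos by (simp add: less_max_iff_disj zero_less_mult_iff)
qed

lemma fixed_point_eq_iff: "fixed_point_eq \<alpha> Cm Cs \<pi> \<phi> \<sigma> r L j d \<longleftrightarrow> mean_dem d = d"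
proof -
  define N where "N = Nidx \<alpha> Cm Cs \<pi> \<phi> L j d"
  define T where "T = (\<Sum>i\<in>{N..<L}. w i)"
  define S where "S = (\<Sum>i\<in>{N..<L}. w i * (hj i + \<pi> * \<alpha> * hj j))"
  have "T \<ge> 0" unfolding T_def by (intro sum_nonneg) (auto intro: w_nonneg)
  then have denominator: "m + \<pi> * \<alpha> * T > 0"
    using m_pos pi_nonneg alpha_pos by (simp add: add_pos_nonneg)
  have "dem i d = (if N \<le> i then sqrt \<alpha> * hj i - \<pi> * \<alpha> * (d - sqrt \<alpha> * hj j) else 0)" if "i < L" for i
    unfolding N_def Nidx_le_iff[OF that] dem_pos_iff[symmetric] by (simp add: dem_def)
  then have "(\<Sum>i<L. w i * dem i d)
      = (\<Sum>i<L. if N \<le> i then w i * (sqrt \<alpha> * hj i - \<pi> * \<alpha> * (d - sqrt \<alpha> * hj j)) else 0)"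
    by (intro sum.cong) auto
  also have "\<dots> = (\<Sum>i\<in>{N..<L}. w i * (sqrt \<alpha> * hj i - \<pi> * \<alpha> * (d - sqrt \<alpha> * hj j)))"
    by (simp add: sum.If_cases) (intro sum.cong, auto)
  also have "\<dots> = sqrt \<alpha> * S - \<pi> * \<alpha> * d * T"
    unfolding S_def T_def
    by (simp add: sum_distrib_left sum_subtractf sum_distrib_right algebra_simps sum.distrib)
  finally have "mean_dem d = d \<longleftrightarrow> d * (m + \<pi> * \<alpha> * T) = sqrt \<alpha> * S"
    unfolding mean_dem_def using m_pos by (auto simp: field_simps)
  also have "\<dots> \<longleftrightarrow> d = sqrt \<alpha> * S / (m + \<pi> * \<alpha> * T)"
    using denominator by (auto simp: field_simps)
  also have "\<dots> \<longleftrightarrow> fixed_point_eq \<alpha> Cm Cs \<pi> \<phi> \<sigma> r L j d"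
    unfolding fixed_point_eq_def Let_def N_def[symmetric] S_def T_def w_def m_def hj_def ..
  finally show ?thesis ..
qed

end

section \<open>Convergence along a sample path\<close>

locale trajectory = limit_equation +
  fixes d0 :: "nat \<Rightarrow> real" and idx rep :: "nat \<Rightarrow> nat" and nz :: "nat \<Rightarrow> real" and B :: real
  assumes idx_lt: "\<And>s. idx s < L" and noise_bounded: "\<And>s. \<bar>nz s\<bar> \<le> B"
    and report_frequency: "(\<lambda>t. (\<Sum>s<t. (if rep s = j then 1 else 0) - m) / real t) \<longlonglongrightarrow> 0"
    and level_frequency: "\<And>i. i < L \<Longrightarrow> (\<lambda>t. (\<Sum>s<t. (if idx s = i \<and> rep s = j then 1 else 0)
           - w i / m * (if rep s = j then 1 else 0)) / real t) \<longlonglongrightarrow> 0"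
    and noise_average: "(\<lambda>t. (\<Sum>s<t. (if rep s = j then 1 else 0) * nz s) / real t) \<longlonglongrightarrow> 0"
begin

definition "hit s = (if rep s = j then 1 else 0 :: real)" for s
definition "D s = demand \<alpha> Cm Cs \<pi> \<phi> d0 idx rep nz s" for s
definition "Db t = Dbar \<alpha> Cm Cs \<pi> \<phi> d0 idx rep nz j t" for t
definition "cnt t = (\<Sum>s<t. hit s)" for t
definition "tot t = (\<Sum>s<t. hit s * D s)" for t
definition "err t = (\<Sum>s<t. hit s * (D s - mean_dem (Db s)))" for t

lemma B_nonneg: "B \<ge> 0" using noise_bounded[of 0] by linarith

lemma D_eq: "rep s = j \<Longrightarrow> D s = dem (idx s) (Db s) + nz s"
  unfolding D_def Db_def dem_def hj_def by (rule demand_eq[OF alpha_pos]) auto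

lemma cnt_Suc: "cnt (Suc t) = cnt t + hit t" unfolding cnt_def by simp
lemma tot_Suc: "tot (Suc t) = tot t + hit t * D t" unfolding tot_def by simp
lemma err_Suc: "err (Suc t) = err t + hit t * (D t - mean_dem (Db t))" unfolding err_def by simp
lemma hit_nonneg: "hit s \<ge> 0" unfolding hit_def by simp
lemma cnt_nonneg: "cnt t \<ge> 0" unfolding cnt_def by (intro sum_nonneg hit_nonneg)

lemma Db_eq: "Db t = (if cnt t = 0 then d0 j else tot t / cnt t)"
proof -
  let ?S = "{s. s < t \<and> rep s = j}"
  have S: "?S = {s\<in>{..<t}. rep s = j}" by auto
  have "real (card ?S) = cnt t"
    unfolding S cnt_def hit_def by (simp add: sum.inter_filter[symmetric])
  moreover have "(\<Sum>s\<in>?S. D s) = (\<Sum>s<t. if rep s = j then D s else 0)"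
    unfolding S by (rule sum.inter_filter) simp
  then have "(\<Sum>s\<in>?S. D s) = tot t"
    unfolding tot_def hit_def by (simp add: if_distrib[of "\<lambda>x. x * _"] cong: if_cong)
  ultimately show ?thesis
    unfolding Db_def Dbar_def avg_rep_def Let_def D_def[symmetric] by (metis of_nat_0_eq_iff)
qed

lemma tot_eq_0:
  assumes "cnt t = 0"
  shows "tot t = 0"
proof -
  have "\<forall>s\<in>{..<t}. hit s = 0" using assms hit_nonneg unfolding cnt_def by (simp add: sum_nonneg_eq_0_iff)
  then show ?thesis unfolding tot_def by simp
qed

lemma Db_step:
  assumes "rep t = j"
  shows "cnt (Suc t) * Db (Suc t) = cnt t * Db t + D t"
proof -
  have "cnt (Suc t) = cnt t + 1" using cnt_Suc[of t] assms by (simp add: hit_def)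
  then have "cnt (Suc t) * Db (Suc t) = tot (Suc t)" using Db_eq[of "Suc t"] cnt_nonneg[of t] by simp
  also have "\<dots> = tot t + D t" using tot_Suc[of t] assms by (simp add: hit_def)
  also have "tot t = cnt t * Db t" using Db_eq[of t] tot_eq_0[of t] by (cases "cnt t = 0") simp_all
  finally show ?thesis .
qed

lemma Db_Suc_eq:
  assumes "rep t \<noteq> j"
  shows "Db (Suc t) = Db t"
proof -
  have "hit t = 0" using assms by (simp add: hit_def)
  then show ?thesis using Db_eq[of t] Db_eq[of "Suc t"] cnt_Suc[of t] tot_Suc[of t] by simp
qed

lemma D_ge:
  assumes "rep s = j"
  shows "D s \<ge> - B"
  using D_eq[OF assms] dem_nonneg[of "idx s" "Db s"] noise_bounded[of s] by linarith

lemma Db_ge: "Db t = d0 j \<or> Db t \<ge> - B"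
proof (cases "cnt t = 0")
  case False
  have "- B * cnt t = (\<Sum>s<t. - B * hit s)" unfolding cnt_def by (simp add: sum_distrib_left)
  also have "\<dots> \<le> tot t"
    unfolding tot_def by (intro sum_mono) (simp add: hit_def D_ge)
  also have "tot t = Db t * cnt t" using Db_eq[of t] False by simp
  finally have "- B * cnt t \<le> Db t * cnt t" .
  moreover have "cnt t > 0" using False cnt_nonneg[of t] by simp
  ultimately have "- B \<le> Db t" by (rule mult_right_le_imp_le)
  then show ?thesis ..
next
  case True
  then show ?thesis using Db_eq[of t] by simp
qed

definition "dem_bound = (\<Sum>i<L. \<bar>sqrt \<alpha> * hj i\<bar>) + c * (\<bar>sqrt \<alpha> * hj j\<bar> + \<bar>d0 j\<bar> + B)"

lemma dem_bound_nonneg: "dem_bound \<ge> 0"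
  unfolding dem_bound_def using c_nonneg B_nonneg
  by (intro add_nonneg_nonneg sum_nonneg mult_nonneg_nonneg) auto

lemma dem_Db_le:
  assumes "i < L"
  shows "dem i (Db t) \<le> dem_bound"
proof -
  have "sqrt \<alpha> * hj i \<le> (\<Sum>i<L. \<bar>sqrt \<alpha> * hj i\<bar>)"
    using member_le_sum[of i "{..<L}" "\<lambda>i. \<bar>sqrt \<alpha> * hj i\<bar>"] assms by simp
  moreover have "- Db t \<le> \<bar>d0 j\<bar> + B" using Db_ge[of t] B_nonneg by auto
  ultimately have "sqrt \<alpha> * hj i + c * (sqrt \<alpha> * hj j) + c * (- Db t)
      \<le> (\<Sum>i<L. \<bar>sqrt \<alpha> * hj i\<bar>) + c * \<bar>sqrt \<alpha> * hj j\<bar> + c * (\<bar>d0 j\<bar> + B)"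
    using c_nonneg by (intro add_mono mult_left_mono) auto
  also have "\<dots> = dem_bound" unfolding dem_bound_def by (simp add: algebra_simps)
  finally show ?thesis
    unfolding dem_def c_def using dem_bound_nonneg by (simp add: algebra_simps)
qed

lemma abs_D_le:
  assumes "rep s = j"
  shows "\<bar>D s\<bar> \<le> dem_bound + B"
proof -
  have "-B \<le> nz s" "nz s \<le> B" using noise_bounded[of s] by (simp_all add: abs_le_iff)
  then show ?thesis
    unfolding abs_le_iff D_eq[OF assms]
    using dem_nonneg[of "idx s" "Db s"] dem_Db_le[OF idx_lt[of s], of s] by linarith
qed

lemma abs_Db_le: "\<bar>Db t\<bar> \<le> \<bar>d0 j\<bar> + dem_bound + B"
proof (cases "cnt t = 0")
  case False
  have "\<bar>tot t\<bar> \<le> (\<Sum>s<t. hit s * (dem_bound + B))"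
    unfolding tot_def using abs_D_le
    by (intro order_trans[OF sum_abs] sum_mono) (auto simp: hit_def)
  also have "\<dots> = cnt t * (dem_bound + B)" unfolding cnt_def by (simp add: sum_distrib_right)
  finally have "\<bar>tot t / cnt t\<bar> \<le> dem_bound + B"
    using False cnt_nonneg[of t] by (simp add: abs_divide divide_le_eq mult.commute)
  then show ?thesis using Db_eq[of t] False by simp
qed (use Db_eq dem_bound_nonneg B_nonneg in simp)

lemma cnt_averages_tendsto: "(\<lambda>t. cnt t / real t) \<longlonglongrightarrow> m"
proof -
  have "(\<lambda>t. (\<Sum>s<t. hit s - m) / real t + m) \<longlonglongrightarrow> 0 + m"
    using report_frequency unfolding hit_def by (intro tendsto_add) auto
  moreover have "eventually (\<lambda>t. (\<Sum>s<t. hit s - m) / real t + m = cnt t / real t) sequentially"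
    using eventually_gt_at_top[of 0]
    by eventually_elim (simp add: cnt_def sum_subtractf diff_divide_distrib)
  ultimately show ?thesis by (simp add: tendsto_cong)
qed

lemma cnt_at_top: "filterlim cnt at_top sequentially"
proof -
  have "filterlim (\<lambda>t. cnt t / real t * real t) at_top sequentially"
    using cnt_averages_tendsto m_pos filterlim_real_sequentially
    by (rule filterlim_tendsto_pos_mult_at_top)
  moreover have "eventually (\<lambda>t. cnt t / real t * real t = cnt t) sequentially"
    using eventually_gt_at_top[of 0] by eventually_elim simp
  ultimately show ?thesis by (simp add: filterlim_cong)
qed

definition "level_dev i s = (if idx s = i \<and> rep s = j then 1 else 0) - w i / m * hit s" for i s

lemma err_increment_eq:
  "hit s * (D s - mean_dem (Db s)) = (\<Sum>i<L. level_dev i s * dem i (Db s)) + hit s * nz s"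
proof (cases "rep s = j")
  case True
  have "(\<Sum>i<L. level_dev i s * dem i (Db s))
      = (\<Sum>i<L. if idx s = i then dem i (Db s) else 0) - (\<Sum>i<L. w i / m * dem i (Db s))"
    unfolding level_dev_def hit_def using True
    by (simp add: algebra_simps sum_subtractf if_distrib[of "\<lambda>x. x * _"] cong: if_cong)
  also have "\<dots> = dem (idx s) (Db s) - mean_dem (Db s)"
    using idx_lt[of s] unfolding mean_dem_def by (simp add: sum_distrib_left)
  finally show ?thesis using D_eq[OF True] True by (simp add: hit_def)
qed (simp add: level_dev_def hit_def)

lemma err_eq: "err t = (\<Sum>i<L. \<Sum>s<t. level_dev i s * dem i (Db s)) + (\<Sum>s<t. hit s * nz s)"
  unfolding err_def err_increment_eq sum.distrib by (subst sum.swap) (rule refl)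

definition "jump_bound = \<bar>d0 j\<bar> + 2 * (dem_bound + B)"

lemma Db_jump_le: "\<bar>Db (Suc s) - Db s\<bar> * cnt (Suc s) \<le> jump_bound"
proof (cases "rep s = j")
  case True
  have "cnt (Suc s) = cnt s + 1" using cnt_Suc[of s] True by (simp add: hit_def)
  then have "D s - Db s = cnt (Suc s) * (Db (Suc s) - Db s)"
    using Db_step[OF True] by (simp add: algebra_simps)
  then have "\<bar>Db (Suc s) - Db s\<bar> * cnt (Suc s) = \<bar>D s - Db s\<bar>"
    using cnt_nonneg[of "Suc s"] by (simp add: abs_mult)
  also have "\<dots> \<le> (dem_bound + B) + (\<bar>d0 j\<bar> + dem_bound + B)"
    using abs_D_le[OF True] abs_Db_le[of s] by linarith
  finally show ?thesis unfolding jump_bound_def by simp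
qed (use Db_Suc_eq dem_bound_nonneg B_nonneg in \<open>simp add: jump_bound_def\<close>)

text \<open>Abel summation moves the slowly varying weights dem i (Db s) out of the averages of
  level_dev i, whose averages vanish by the law of large numbers.\<close>

lemma level_dev_averages_tendsto_zero:
  assumes "i < L"
  shows "(\<lambda>t. (\<Sum>s<t. level_dev i s * dem i (Db s)) / real t) \<longlonglongrightarrow> 0"
proof (rule weighted_averages_tendsto_zero)
  show "(\<lambda>t. (\<Sum>s<t. level_dev i s) / real t) \<longlonglongrightarrow> 0"
    using level_frequency[OF assms] unfolding level_dev_def hit_def .
  show "\<bar>dem i (Db s)\<bar> \<le> dem_bound" for s
    using dem_nonneg dem_Db_le[OF assms] by simp
  have "eventually (\<lambda>s. m / 2 < cnt (Suc s) / real (Suc s)) sequentially"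
    using m_pos by (intro order_tendstoD(1)[OF LIMSEQ_Suc[OF cnt_averages_tendsto]]) simp
  then show "eventually (\<lambda>s. real (Suc s) * \<bar>dem i (Db (Suc s)) - dem i (Db s)\<bar>
      \<le> c * jump_bound / (m / 2)) sequentially"
  proof eventually_elim
    case (elim s)
    define q where "q = cnt (Suc s) / real (Suc s)"
    have "q > m / 2" using elim unfolding q_def .
    then have q: "q > m / 2" "q > 0" using m_pos by linarith+
    have "real (Suc s) * \<bar>dem i (Db (Suc s)) - dem i (Db s)\<bar> \<le> real (Suc s) * (c * \<bar>Db (Suc s) - Db s\<bar>)"
      by (intro mult_left_mono dem_lipschitz) simp
    also have "\<dots> = c * (\<bar>Db (Suc s) - Db s\<bar> * cnt (Suc s)) / q"
      using q unfolding q_def by (simp add: field_simps)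
    also have "\<dots> \<le> c * jump_bound / q"
      using c_nonneg q Db_jump_le[of s] by (intro divide_right_mono mult_left_mono) auto
    also have "\<dots> \<le> c * jump_bound / (m / 2)"
      using c_nonneg q m_pos dem_bound_nonneg B_nonneg unfolding jump_bound_def
      by (intro divide_left_mono mult_nonneg_nonneg) auto
    finally show ?case .
  qed
qed

lemma err_over_cnt_tendsto_zero: "(\<lambda>t. err t / cnt t) \<longlonglongrightarrow> 0"
proof -
  have "(\<lambda>t. (\<Sum>i<L. (\<Sum>s<t. level_dev i s * dem i (Db s)) / real t) + (\<Sum>s<t. hit s * nz s) / real t)
      \<longlonglongrightarrow> 0 + 0"
    using noise_average unfolding hit_def[symmetric]
    by (intro tendsto_add tendsto_null_sum level_dev_averages_tendsto_zero) auto
  then have "(\<lambda>t. err t / real t) \<longlonglongrightarrow> 0"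
    unfolding err_eq by (simp add: add_divide_distrib sum_divide_distrib)
  then have "(\<lambda>t. (err t / real t) / (cnt t / real t)) \<longlonglongrightarrow> 0 / m"
    using m_pos by (intro tendsto_divide cnt_averages_tendsto) auto
  then have lim: "(\<lambda>t. (err t / real t) / (cnt t / real t)) \<longlonglongrightarrow> 0" by simp
  have "eventually (\<lambda>t. (err t / real t) / (cnt t / real t) = err t / cnt t) sequentially"
    using eventually_gt_at_top[of 0] by eventually_elim (simp add: field_simps)
  from iffD1[OF tendsto_cong[OF this] lim] show ?thesis .
qed

lemma Db_tendsto_fixpoint:
  assumes "mean_dem d = d"
  shows "Db \<longlonglongrightarrow> d"
proof (rule running_average_tendsto_fixpoint[where J = "\<lambda>t. rep t = j" and Y = D])
  show "cnt (Suc t) = cnt t + (if rep t = j then 1 else 0)" for t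
    using cnt_Suc[of t] by (simp add: hit_def)
  show "err (Suc t) = err t + (if rep t = j then D t - mean_dem (Db t) else 0)" for t
    using err_Suc[of t] by (simp add: hit_def)
qed (use Db_step Db_Suc_eq cnt_at_top err_over_cnt_tendsto_zero mean_dem_antimono mean_dem_lipschitz
      c_nonneg assms in auto)

end

section \<open>The reporting process\<close>

lemma (in prob_space) indep_var_of_generated_sigma_sets:
  assumes indep: "indep_set (sigma_sets (space M) G) (sigma_sets (space M) H)"
    and G: "G \<subseteq> Pow (space M)" and H: "H \<subseteq> Pow (space M)"
    and X: "X \<in> measurable (sigma (space M) G) S" "random_variable S X"
    and Y: "Y \<in> measurable (sigma (space M) H) T" "random_variable T Y"
  shows "indep_var S X T Y"
proof -
  have generated_le: "sigma_sets (space M) {Z -` A \<inter> space M | A. A \<in> sets U} \<subseteq> sigma_sets (space M) K"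
    if "Z \<in> measurable (sigma (space M) K) U" "K \<subseteq> Pow (space M)" for Z U K
    using measurable_sets[OF that(1)] that(2)
    by (intro sigma_sets_mono) (auto simp: sets_measure_of space_measure_of)
  have "indep_set (sigma_sets (space M) {X -` A \<inter> space M | A. A \<in> sets S})
      (sigma_sets (space M) {Y -` A \<inter> space M | A. A \<in> sets T})"
    using indep generated_le[OF X(1) G] generated_le[OF Y(1) H] unfolding indep_sets2_eq by blast
  then show ?thesis unfolding indep_var_eq using X(2) Y(2) by blast
qed

locale reporting_process = prob_space M + limit_equation \<alpha> Cm Cs \<pi> \<phi> \<sigma> r L j
  for M :: "'w measure" and \<alpha> Cm Cs \<pi> :: real and \<phi> \<sigma> :: "nat \<Rightarrow> real" and r :: "nat \<Rightarrow> nat \<Rightarrow> real"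
    and L j :: nat +
  fixes I R :: "nat \<Rightarrow> 'w \<Rightarrow> nat" and Nz :: "nat \<Rightarrow> 'w \<Rightarrow> real" and BN :: real
  assumes I_measurable[measurable]: "\<And>t. I t \<in> measurable M (count_space UNIV)"
    and R_measurable[measurable]: "\<And>t. R t \<in> measurable M (count_space UNIV)"
    and Nz_measurable[measurable]: "\<And>t. Nz t \<in> borel_measurable M"
    and pair_dist: "\<And>t i k. i < L \<Longrightarrow> k < L \<Longrightarrow> prob {\<omega> \<in> space M. I t \<omega> = i \<and> R t \<omega> = k} = \<sigma> i * r i k"
    and sigma_sum: "(\<Sum>i<L. \<sigma> i) = 1"
    and r_stoch: "\<And>i. i < L \<Longrightarrow> (\<Sum>k<L. r i k) = 1"
    and pair_indep: "indep_vars (\<lambda>_. count_space UNIV) (\<lambda>t \<omega>. (I t \<omega>, R t \<omega>)) UNIV"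
    and noise_indep: "indep_vars (\<lambda>_. borel) Nz UNIV"
    and noise_bounded: "\<And>t. AE \<omega> in M. \<bar>Nz t \<omega>\<bar> \<le> BN"
    and noise_mean: "\<And>t. expectation (Nz t) = 0"
    and j_lt: "j < L"
    and families_indep: "indep_set
          (sigma_sets (space M) {{\<omega> \<in> space M. I t \<omega> = i \<and> R t \<omega> = k} | t i k. True})
          (sigma_sets (space M) {{\<omega> \<in> space M. Nz t \<omega> \<in> B} | t B. B \<in> sets borel})"
begin

lemma pair_law_total: "(\<Sum>i<L. \<Sum>k<L. \<sigma> i * r i k) = 1"
  using sigma_sum r_stoch by (simp add: sum_distrib_left[symmetric])

lemma AE_pairs_lt: "AE \<omega> in M. \<forall>t. I t \<omega> < L \<and> R t \<omega> < L"
proof -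
  have "AE \<omega> in M. I t \<omega> < L \<and> R t \<omega> < L" for t
  proof -
    define E where "E p = {\<omega> \<in> space M. I t \<omega> = fst p \<and> R t \<omega> = snd p}" for p
    have [measurable]: "E p \<in> events" for p unfolding E_def by measurable
    have "{\<omega> \<in> space M. I t \<omega> < L \<and> R t \<omega> < L} = (\<Union>p\<in>{..<L} \<times> {..<L}. E p)"
      unfolding E_def by auto
    moreover have "prob (\<Union>p\<in>{..<L} \<times> {..<L}. E p) = (\<Sum>p\<in>{..<L} \<times> {..<L}. prob (E p))"
      by (intro measure_finite_Union) (auto simp: disjoint_family_on_def E_def)
    moreover have "\<dots> = (\<Sum>p\<in>{..<L} \<times> {..<L}. \<sigma> (fst p) * r (fst p) (snd p))"
      by (intro sum.cong refl) (auto simp: E_def pair_dist)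
    moreover have "\<dots> = 1"
      using pair_law_total by (simp add: sum.cartesian_product case_prod_beta)
    ultimately have "prob {\<omega> \<in> space M. I t \<omega> < L \<and> R t \<omega> < L} = 1" by simp
    then show ?thesis by (subst (asm) prob_eq_1) (auto elim: AE_mp)
  qed
  then show ?thesis by (simp add: AE_all_countable)
qed

lemma expectation_pair_fun:
  "expectation (\<lambda>\<omega>. h (I t \<omega>, R t \<omega>)) = (\<Sum>i<L. \<Sum>k<L. h (i, k) * (\<sigma> i * r i k))"
proof -
  define E where "E i k = {\<omega> \<in> space M. I t \<omega> = i \<and> R t \<omega> = k}" for i k
  have [measurable]: "E i k \<in> events" for i k unfolding E_def by measurable
  have "AE \<omega> in M. h (I t \<omega>, R t \<omega>) = (\<Sum>i<L. \<Sum>k<L. h (i, k) * indicator (E i k) \<omega>)"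
    using AE_pairs_lt AE_space
  proof eventually_elim
    case (elim \<omega>)
    then have "(\<Sum>i<L. \<Sum>k<L. h (i, k) * indicator (E i k) \<omega>)
        = (\<Sum>i<L. if i = I t \<omega> then h (i, R t \<omega>) else 0)"
      unfolding E_def
      by (intro sum.cong refl) (auto simp: indicator_def if_distrib[of "\<lambda>x. _ * x"] sum.If_cases)
    with elim show ?case by simp
  qed
  then have "expectation (\<lambda>\<omega>. h (I t \<omega>, R t \<omega>))
      = expectation (\<lambda>\<omega>. \<Sum>i<L. \<Sum>k<L. h (i, k) * indicator (E i k) \<omega>)"
    by (intro integral_cong_AE) measurable
  also have "\<dots> = (\<Sum>i<L. \<Sum>k<L. expectation (\<lambda>\<omega>. h (i, k) * indicator (E i k) \<omega>))"
  proof -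
    have integrable: "integrable M (\<lambda>\<omega>. h (i, k) * indicator (E i k) \<omega>)" for i k
      by (intro integrable_mult_right integrable_real_indicator) (simp_all add: less_top[symmetric])
    show ?thesis
      by (subst Bochner_Integration.integral_sum, rule Bochner_Integration.integrable_sum,
          rule integrable)
        (intro sum.cong refl Bochner_Integration.integral_sum integrable)
  qed
  also have "\<dots> = (\<Sum>i<L. \<Sum>k<L. h (i, k) * prob (E i k))"
    by (simp add: E_def)
  finally show ?thesis by (simp add: E_def pair_dist)
qed

lemma AE_pair_averages_tendsto_zero:
  fixes h :: "nat \<times> nat \<Rightarrow> real"
  assumes bounded: "\<And>p. \<bar>h p\<bar> \<le> H"
    and mean_zero: "(\<Sum>i<L. \<Sum>k<L. h (i, k) * (\<sigma> i * r i k)) = 0"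
  shows "AE \<omega> in M. (\<lambda>t. (\<Sum>s<t. h (I s \<omega>, R s \<omega>)) / real t) \<longlonglongrightarrow> 0"
proof (rule slln_bounded_uncorrelated[where B = H])
  show "(\<lambda>\<omega>. h (I s \<omega>, R s \<omega>)) \<in> borel_measurable M" for s by measurable
  show "AE \<omega> in M. \<bar>h (I s \<omega>, R s \<omega>)\<bar> \<le> H" for s using bounded by simp
  fix a b :: nat assume "a \<noteq> b"
  have "indep_vars (\<lambda>_. borel) (\<lambda>t \<omega>. h (I t \<omega>, R t \<omega>)) {a, b}"
    by (rule indep_vars_compose2[OF indep_vars_subset[OF pair_indep]]) auto
  then have "expectation (\<lambda>\<omega>. \<Prod>t\<in>{a, b}. h (I t \<omega>, R t \<omega>))
      = (\<Prod>t\<in>{a, b}. expectation (\<lambda>\<omega>. h (I t \<omega>, R t \<omega>)))"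
    using bounded
    by (intro indep_vars_lebesgue_integral) (auto intro: integrable_const_bound[where B = H])
  then show "expectation (\<lambda>\<omega>. h (I a \<omega>, R a \<omega>) * h (I b \<omega>, R b \<omega>)) = 0"
    using \<open>a \<noteq> b\<close> expectation_pair_fun[of h] mean_zero by simp
qed

lemma AE_report_frequency:
  "AE \<omega> in M. (\<lambda>t. (\<Sum>s<t. (if R s \<omega> = j then 1 else 0) - m) / real t) \<longlonglongrightarrow> 0"
proof -
  have "(\<Sum>i<L. \<Sum>k<L. ((if k = j then 1 else 0) - m) * (\<sigma> i * r i k))
      = (\<Sum>i<L. \<Sum>k<L. (if k = j then \<sigma> i * r i k else 0) - m * (\<sigma> i * r i k))"
    by (intro sum.cong refl) (simp add: algebra_simps)
  also have "\<dots> = (\<Sum>i<L. \<Sum>k<L. if k = j then \<sigma> i * r i k else 0) - m * (\<Sum>i<L. \<Sum>k<L. \<sigma> i * r i k)"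
    by (simp add: sum_subtractf sum_distrib_left)
  also have "\<dots> = 0" using j_lt unfolding pair_law_total m_def by simp
  finally have mean_zero: "(\<Sum>i<L. \<Sum>k<L. ((if k = j then 1 else 0) - m) * (\<sigma> i * r i k)) = 0" .
  have "\<bar>(if snd p = j then 1 else 0) - m\<bar> \<le> 1 + \<bar>m\<bar>" for p :: "nat \<times> nat" by auto
  from AE_pair_averages_tendsto_zero[where h = "\<lambda>p. (if snd p = j then 1 else 0) - m", OF this] mean_zero
  show ?thesis by simp
qed

lemma AE_level_frequency:
  "AE \<omega> in M. \<forall>i<L. (\<lambda>t. (\<Sum>s<t. (if I s \<omega> = i \<and> R s \<omega> = j then 1 else 0)
      - w i / m * (if R s \<omega> = j then 1 else 0)) / real t) \<longlonglongrightarrow> 0"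
proof -
  have "AE \<omega> in M. (\<lambda>t. (\<Sum>s<t. (if I s \<omega> = i \<and> R s \<omega> = j then 1 else 0)
      - w i / m * (if R s \<omega> = j then 1 else 0)) / real t) \<longlonglongrightarrow> 0" if "i < L" for i
  proof -
    have "(\<Sum>k<L. if i' = i \<and> k = j then \<sigma> i' * r i' k else 0) = (if i' = i then w i else 0)" for i'
      using j_lt unfolding w_def by (cases "i' = i") simp_all
    then have "(\<Sum>i'<L. \<Sum>k<L. ((if i' = i \<and> k = j then 1 else 0) - w i / m * (if k = j then 1 else 0))
          * (\<sigma> i' * r i' k))
        = (\<Sum>i'<L. \<Sum>k<L. (if i' = i \<and> k = j then \<sigma> i' * r i' k else 0)
            - (if k = j then w i / m * (\<sigma> i' * r i' k) else 0))"
      by (intro sum.cong refl) (simp add: algebra_simps)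
    also have "\<dots> = w i - (\<Sum>i'<L. w i / m * (\<sigma> i' * r i' j))"
      using that j_lt
        \<open>\<And>i'. (\<Sum>k<L. if i' = i \<and> k = j then \<sigma> i' * r i' k else 0) = (if i' = i then w i else 0)\<close>
      by (simp add: sum_subtractf)
    also have "\<dots> = w i - w i / m * m" unfolding m_def by (simp add: sum_distrib_left)
    also have "\<dots> = 0" using m_pos by simp
    finally have mean_zero: "(\<Sum>i'<L. \<Sum>k<L. ((if i' = i \<and> k = j then 1 else 0)
        - w i / m * (if k = j then 1 else 0)) * (\<sigma> i' * r i' k)) = 0" .
    have "\<bar>(if fst p = i \<and> snd p = j then 1 else 0) - x * (if snd p = j then 1 else 0)\<bar> \<le> 1 + \<bar>x\<bar>"
      for p :: "nat \<times> nat" and x :: real by auto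
    from AE_pair_averages_tendsto_zero[where h = "\<lambda>p. (if fst p = i \<and> snd p = j then 1 else 0)
        - w i / m * (if snd p = j then 1 else 0)", OF this[of _ "w i / m"]] mean_zero
    show ?thesis by simp
  qed
  then show ?thesis by (simp add: AE_all_countable)
qed

definition "pair_events = {{\<omega> \<in> space M. I t \<omega> = i \<and> R t \<omega> = k} | t i k. True}"
definition "noise_events = {{\<omega> \<in> space M. Nz t \<omega> \<in> B} | t B. B \<in> sets (borel :: real measure)}"

lemma pair_events_subset: "pair_events \<subseteq> Pow (space M)"
  unfolding pair_events_def by auto

lemma noise_events_subset: "noise_events \<subseteq> Pow (space M)"
  unfolding noise_events_def by auto

lemma R_measurable_pair_events: "R t \<in> measurable (sigma (space M) pair_events) (count_space UNIV)"
  unfolding measurable_count_space_eq2_countable space_measure_of[OF pair_events_subset]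
    sets_measure_of[OF pair_events_subset]
proof (intro conjI ballI)
  fix k :: nat
  have "R t -` {k} \<inter> space M = (\<Union>i. {\<omega> \<in> space M. I t \<omega> = i \<and> R t \<omega> = k})" by auto
  also have "\<dots> \<in> sigma_sets (space M) pair_events"
    by (intro sigma_sets.Union sigma_sets.Basic) (auto simp: pair_events_def)
  finally show "R t -` {k} \<inter> space M \<in> sigma_sets (space M) pair_events" .
qed simp

lemma Nz_measurable_noise_events: "Nz t \<in> borel_measurable (sigma (space M) noise_events)"
proof (rule measurableI)
  fix U :: "real set" assume "U \<in> sets borel"
  then have "{\<omega> \<in> space M. Nz t \<omega> \<in> U} \<in> sigma_sets (space M) noise_events"
    by (intro sigma_sets.Basic) (auto simp: noise_events_def)
  then show "Nz t -` U \<inter> space (sigma (space M) noise_events) \<in> sets (sigma (space M) noise_events)"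
    unfolding space_measure_of[OF noise_events_subset] sets_measure_of[OF noise_events_subset]
    by (simp add: Int_def conj_commute)
qed simp

lemma reported_noise_uncorrelated:
  assumes "a \<noteq> b"
  shows "expectation (\<lambda>\<omega>. (if R a \<omega> = j then 1 else 0) * Nz a \<omega>
      * ((if R b \<omega> = j then 1 else 0) * Nz b \<omega>)) = 0"
proof -
  note R_measurable_pair_events[measurable] Nz_measurable_noise_events[measurable]
  define X where "X \<omega> = (if R a \<omega> = j then 1 else 0) * (if R b \<omega> = j then 1 else (0::real))" for \<omega>
  define Y where "Y \<omega> = Nz a \<omega> * Nz b \<omega>" for \<omega>
  have X_measurable: "X \<in> borel_measurable (sigma (space M) pair_events)" "X \<in> borel_measurable M"
    unfolding X_def by measurable
  have Y_measurable: "Y \<in> borel_measurable (sigma (space M) noise_events)" "Y \<in> borel_measurable M"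
    unfolding Y_def by measurable
  have Nz_integrable: "integrable M (Nz t)" for t
    using noise_bounded[of t] by (intro integrable_const_bound[where B = BN]) simp_all
  have "AE \<omega> in M. norm (Y \<omega>) \<le> BN * BN"
    using noise_bounded[of a] noise_bounded[of b]
    by eventually_elim (simp add: Y_def abs_mult mult_mono')
  then have Y_integrable: "integrable M Y" using Y_measurable by (intro integrable_const_bound) simp_all
  have "indep_var borel X borel Y"
    using families_indep[folded pair_events_def noise_events_def] pair_events_subset noise_events_subset
      X_measurable Y_measurable
    by (rule indep_var_of_generated_sigma_sets)
  moreover have "integrable M X"
    using X_measurable by (intro integrable_const_bound[where B = 1]) (simp_all add: X_def)
  ultimately have "expectation (\<lambda>\<omega>. X \<omega> * Y \<omega>) = expectation X * expectation Y"
    using Y_integrable by (intro indep_var_lebesgue_integral)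
  moreover have "expectation Y = 0"
  proof -
    have "indep_vars (\<lambda>_. borel) Nz {a, b}" by (rule indep_vars_subset[OF noise_indep]) simp
    then have "expectation (\<lambda>\<omega>. \<Prod>t\<in>{a, b}. Nz t \<omega>) = (\<Prod>t\<in>{a, b}. expectation (Nz t))"
      by (intro indep_vars_lebesgue_integral) (auto intro: Nz_integrable)
    then show ?thesis unfolding Y_def using assms noise_mean by simp
  qed
  ultimately show ?thesis unfolding X_def Y_def by (simp add: ac_simps)
qed

lemma AE_noise_average:
  "AE \<omega> in M. (\<lambda>t. (\<Sum>s<t. (if R s \<omega> = j then 1 else 0) * Nz s \<omega>) / real t) \<longlonglongrightarrow> 0"
proof (rule slln_bounded_uncorrelated[where B = BN])
  show "AE \<omega> in M. \<bar>(if R s \<omega> = j then 1 else 0) * Nz s \<omega>\<bar> \<le> BN" for s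
    using noise_bounded[of s] by eventually_elim (auto simp: abs_mult)
qed (simp_all add: reported_noise_uncorrelated)

lemma AE_Dbar_tendsto:
  assumes "mean_dem d = d"
  shows "AE \<omega> in M. (\<lambda>t. Dbar \<alpha> Cm Cs \<pi> \<phi> d0 (\<lambda>s. I s \<omega>) (\<lambda>s. R s \<omega>) (\<lambda>s. Nz s \<omega>) j t) \<longlonglongrightarrow> d"
proof -
  have "AE \<omega> in M. \<forall>s. \<bar>Nz s \<omega>\<bar> \<le> BN" using noise_bounded by (simp add: AE_all_countable)
  with AE_pairs_lt AE_report_frequency AE_level_frequency AE_noise_average
  show ?thesis
  proof eventually_elim
    case (elim \<omega>)
    interpret trajectory \<alpha> Cm Cs \<pi> \<phi> \<sigma> r L j d0 "\<lambda>s. I s \<omega>" "\<lambda>s. R s \<omega>" "\<lambda>s. Nz s \<omega>" BN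
      by unfold_locales (use elim in auto)
    from Db_tendsto_fixpoint[OF assms] show ?case unfolding Db_def .
  qed
qed

end

theorem theorem2:
  fixes M :: "'w measure" and L :: nat and \<alpha> Cm Cs \<pi> :: real
    and \<phi> \<sigma> d0 :: "nat \<Rightarrow> real" and r :: "nat \<Rightarrow> nat \<Rightarrow> real"
    and I R :: "nat \<Rightarrow> 'w \<Rightarrow> nat" and Nz :: "nat \<Rightarrow> 'w \<Rightarrow> real" and j :: nat
  assumes P: "prob_space M"
    and alpha: "0 < \<alpha>" "\<alpha> \<le> 1"
    and costs: "0 \<le> Cm" "0 \<le> Cs"
    and phi_mono: "strict_mono_on {..<L} \<phi>"
    and phi_low: "\<phi> 0 > \<alpha> * (Cs + Cm)"
    and sigma_pos: "\<forall>i<L. 0 < \<sigma> i"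
    and sigma_sum: "(\<Sum>i<L. \<sigma> i) = 1"
    and r_nonneg: "\<forall>i<L. \<forall>k<L. 0 \<le> r i k"
    and r_stoch: "\<forall>i<L. (\<Sum>k<L. r i k) = 1"
    and I_meas: "\<forall>t. I t \<in> measurable M (count_space UNIV)"
    and R_meas: "\<forall>t. R t \<in> measurable M (count_space UNIV)"
    and N_meas: "\<forall>t. Nz t \<in> borel_measurable M"
    and pair_dist: "\<forall>t. \<forall>i<L. \<forall>k<L.
                      measure M {\<omega> \<in> space M. I t \<omega> = i \<and> R t \<omega> = k} = \<sigma> i * r i k"
    and pair_indep: "prob_space.indep_vars M (\<lambda>_. count_space UNIV) (\<lambda>t \<omega>. (I t \<omega>, R t \<omega>)) UNIV"
    and noise_indep: "prob_space.indep_vars M (\<lambda>_. borel) Nz UNIV"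
    and noise_ident: "\<forall>t. distr M borel (Nz t) = distr M borel (Nz 0)"
    and noise_bdd: "\<exists>B. \<forall>t. AE \<omega> in M. \<bar>Nz t \<omega>\<bar> \<le> B"
    and noise_mean: "\<forall>t. integral\<^sup>L M (Nz t) = 0"
    and families_indep: "prob_space.indep_set M
          (sigma_sets (space M)
             {{\<omega> \<in> space M. I t \<omega> = i \<and> R t \<omega> = k} | t i k. True})
          (sigma_sets (space M)
             {{\<omega> \<in> space M. Nz t \<omega> \<in> B} | t B. B \<in> sets borel})"
    and pi_nonneg: "0 \<le> \<pi>"
    and j_lt: "j < L"
    and mj_pos: "(\<Sum>i<L. \<sigma> i * r i j) > 0"
  shows "\<exists>d. gfun \<alpha> Cm Cs \<pi> \<phi> \<sigma> r L j d = 0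
           \<and> (\<forall>d'. gfun \<alpha> Cm Cs \<pi> \<phi> \<sigma> r L j d' = 0 \<longrightarrow> d' = d)
           \<and> fixed_point_eq \<alpha> Cm Cs \<pi> \<phi> \<sigma> r L j d
           \<and> (\<forall>d'. fixed_point_eq \<alpha> Cm Cs \<pi> \<phi> \<sigma> r L j d' \<longrightarrow> d' = d)
           \<and> (AE \<omega> in M.
                (\<lambda>t. Dbar \<alpha> Cm Cs \<pi> \<phi> d0 (\<lambda>s. I s \<omega>) (\<lambda>s. R s \<omega>) (\<lambda>s. Nz s \<omega>) j t)
                  \<longlonglongrightarrow> d)"
proof -
  interpret prob_space M by (rule P)
  obtain BN where noise_bound: "\<And>t. AE \<omega> in M. \<bar>Nz t \<omega>\<bar> \<le> BN" using noise_bdd by blast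
  interpret reporting_process M \<alpha> Cm Cs \<pi> \<phi> \<sigma> r L j I R Nz BN
    by unfold_locales (use assms noise_bound in \<open>auto intro: less_imp_le\<close>)
  obtain d where fixpoint: "mean_dem d = d" using mean_dem_fixpoint_exists by blast
  then have "mean_dem d' = d' \<longleftrightarrow> d' = d" for d' using mean_dem_fixpoint_unique by blast
  then show ?thesis
    using AE_Dbar_tendsto[OF fixpoint] unfolding gfun_eq fixed_point_eq_iff by auto
qed

end
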